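(* Let $X=\{x_0,\ldots,x_m\}$, $\tilde X=\{\tilde x_1,\ldots,\tilde x_q\}$ (commuting), $c\in\mathbb{R}^q\langle\langle X\rangle\rangle$ proper and $d\in\mathbb{R}^m[[\tilde X]]$ purely improper. Then the series $c\,\tilde\circ\,\delta_{(d^{-1}\circ c)^{\circ-1}}$ is a proper series in $\mathbb{R}^q\langle\langle X\rangle\rangle$ and is the unique fixed point of the map $e\mapsto c\,\tilde\circ\,\delta_{(d\circ e)}$ on the proper series of $\mathbb{R}^q\langle\langle X\rangle\rangle$, where $\circ$ between $d$ (or $d^{-1}$) and a noncommutative series denotes the Wiener-Fliess composition product.
   Context: $\mathbb{R}^\ell\langle\langle X\rangle\rangle$: formal power series in noncommuting letters with coefficients in $\mathbb{R}^\ell$; proper means zero constant term; purely improper means each component has nonzero constant term; componentwise products. $\mathbb{R}^m[[\tilde X]]$: formal power series in commuting letters with coefficients in $\mathbb{R}^m$; $d^{-1}$ is the componentwise Cauchy (multiplicative) inverse of purely improper $d$. Shuffle product $\sqcup\!\sqcup$: bilinear, $(x_i\eta)\sqcup\!\sqcup(x_j\xi)=x_i(\eta\sqcup\!\sqcup x_j\xi)+x_j(x_i\eta\sqcup\!\sqcup\xi)$, $\eta\sqcup\!\sqcup\emptyset=\emptyset\sqcup\!\sqcup\eta=\eta$; $g^{\sqcup\!\sqcup-1}$ the componentwise shuffle inverse. Wiener-Fliess composition for proper $e\in\mathbb{R}^q\langle\langle X\rangle\rangle$: $d\circ e=\sum_{\tilde\eta\in\tilde X^\ast}(d,\tilde\eta)e^{\sqcup\!\sqcup\tilde\eta}$,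 $e^{\sqcup\!\sqcup\emptyset}=1$, $e^{\sqcup\!\sqcup\tilde x_i\tilde\eta}=e_i\sqcup\!\sqcup e^{\sqcup\!\sqcup\tilde\eta}$. Multiplicative mixed composition of $c\in\mathbb{R}^q\langle\langle X\rangle\rangle$ and $g\in\mathbb{R}^m\langle\langle X\rangle\rangle$: $c\,\tilde\circ\,\delta_g=\sum_{\eta\in X^\ast}(c,\eta)\bar\phi_g(\eta)(\mathbf 1)$, $\mathbf 1=1\emptyset$, $\bar\phi_g(x_0)(w)=x_0w$, $\bar\phi_g(x_i)(w)=x_i(g_i\sqcup\!\sqcup w)$ ($i\ge1$), extended multiplicatively (concatenation to composition). For purely improper $g\in\mathbb{R}^m\langle\langle X\rangle\rangle$, $g^{\circ-1}$ is the unique $h\in\mathbb{R}^m\langle\langle X\rangle\rangle$ with $h=g^{\sqcup\!\sqcup-1}\,\tilde\circ\,\delta_h$. *)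

theory Defs
  imports Complex_Main
begin

(* Noncommutative letters x_0..x_m are the naturals 0..m; words are nat lists.
   A series in R^l<<X>> is  c :: nat => nat list => real, c i w = coefficient of
   word w in component i (components indexed 1..l), zero outside the carrier.
   Commuting letters ~x_1..~x_q; monomials are exponent vectors  nat => nat
   supported in {1..q}.  A series in R^m[[~X]] is d :: nat => (nat => nat) => real. *)

type_synonym ncs = "nat list \<Rightarrow> real"
type_synonym vncs = "nat \<Rightarrow> nat list \<Rightarrow> real"
type_synonym cs = "(nat \<Rightarrow> nat) \<Rightarrow> real"
type_synonym vcs = "nat \<Rightarrow> (nat \<Rightarrow> nat) \<Rightarrow> real"

definition series :: "nat \<Rightarrow> nat \<Rightarrow> vncs set" where
  "series l m = {c. \<forall>i w. (i \<notin> {1..l} \<or> \<not> set w \<subseteq> {0..m}) \<longrightarrow> c i w = 0}"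

definition proper_series :: "nat \<Rightarrow> nat \<Rightarrow> vncs set" where
  "proper_series l m = {c \<in> series l m. \<forall>i. c i [] = 0}"

definition one_s :: ncs where
  "one_s w = (if w = [] then 1 else 0)"

definition shuffle :: "ncs \<Rightarrow> ncs \<Rightarrow> ncs" where
  "shuffle a b w = (\<Sum>S\<in>Pow {..<length w}. a (nths w S) * b (nths w (- S)))"

definition shinv_s :: "ncs \<Rightarrow> ncs" where
  "shinv_s a = (THE b. shuffle a b = one_s)"

definition shinv :: "nat \<Rightarrow> vncs \<Rightarrow> vncs" where
  "shinv l g i = (if i \<in> {1..l} then shinv_s (g i) else (\<lambda>_. 0))"

definition prepend :: "nat \<Rightarrow> ncs \<Rightarrow> ncs" where
  "prepend i s w = (case w of [] \<Rightarrow> 0 | j # w' \<Rightarrow> if j = i then s w' else 0)"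

(* phi_g(eta)(1) *)
fun phi :: "vncs \<Rightarrow> nat list \<Rightarrow> ncs" where
  "phi g [] = one_s"
| "phi g (i # eta) = (if i = 0 then prepend 0 (phi g eta)
                     else prepend i (shuffle (g i) (phi g eta)))"

(* multiplicative mixed composition  c ~o delta_g,  c in R^l<<X>>, X = {x_0..x_m}.
   phi g eta (1) only has support on words of length >= length eta, so the
   coefficient of w is a finite sum over words eta with length eta <= length w. *)
definition mixcomp :: "nat \<Rightarrow> nat \<Rightarrow> vncs \<Rightarrow> vncs \<Rightarrow> vncs" where
  "mixcomp l m c g j w =
     (if j \<in> {1..l} \<and> set w \<subseteq> {0..m}
      then (\<Sum>eta\<in>{eta. set eta \<subseteq> {0..m} \<and> length eta \<le> length w}. c j eta * phi g eta w)
      else 0)"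

definition compinv :: "nat \<Rightarrow> vncs \<Rightarrow> vncs" where
  "compinv m g = (THE h. h = mixcomp m m (shinv m g) h)"

definition mons :: "nat \<Rightarrow> (nat \<Rightarrow> nat) set" where
  "mons q = {alpha. \<forall>j. j \<notin> {1..q} \<longrightarrow> alpha j = 0}"

definition cseries :: "nat \<Rightarrow> nat \<Rightarrow> vcs set" where
  "cseries m q = {d. \<forall>i alpha. (i \<notin> {1..m} \<or> alpha \<notin> mons q) \<longrightarrow> d i alpha = 0}"

definition cprod :: "cs \<Rightarrow> cs \<Rightarrow> cs" where
  "cprod a b alpha = (\<Sum>beta\<in>{beta. \<forall>j. beta j \<le> alpha j}. a beta * b (\<lambda>j. alpha j - beta j))"

definition cinv_s :: "nat \<Rightarrow> cs \<Rightarrow> cs" where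
  "cinv_s q a = (THE b. (\<forall>alpha. alpha \<notin> mons q \<longrightarrow> b alpha = 0) \<and>
       (\<forall>alpha\<in>mons q. cprod a b alpha = (if alpha = (\<lambda>_. 0) then 1 else 0)))"

definition cinv :: "nat \<Rightarrow> nat \<Rightarrow> vcs \<Rightarrow> vcs" where
  "cinv m q d i = (if i \<in> {1..m} then cinv_s q (d i) else (\<lambda>_. 0))"

fun shpow :: "ncs \<Rightarrow> nat \<Rightarrow> ncs" where
  "shpow s 0 = one_s"
| "shpow s (Suc n) = shuffle s (shpow s n)"

fun shmon :: "vncs \<Rightarrow> (nat \<Rightarrow> nat) \<Rightarrow> nat list \<Rightarrow> ncs" where
  "shmon e alpha [] = one_s"
| "shmon e alpha (j # js) = shuffle (shpow (e j) (alpha j)) (shmon e alpha js)"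

(* For proper e, e^{sh alpha} has support on words of length >= |alpha|, so the
   coefficient of w is a finite sum over monomials of total degree <= length w. *)
definition wfcomp :: "nat \<Rightarrow> nat \<Rightarrow> vcs \<Rightarrow> vncs \<Rightarrow> vncs" where
  "wfcomp m q d e i w =
     (if i \<in> {1..m} \<and> set w \<subseteq> {0..m}
      then (\<Sum>alpha\<in>{alpha\<in>mons q. (\<Sum>j\<in>{1..q}. alpha j) \<le> length w}.
              d i alpha * shmon e alpha [1..<q+1] w)
      else 0)"

end

theory Submission
  imports Defs
begin

text \<open>The substitution \<open>a \<mapsto> a ~\<circ> \<delta>\<^sub>g\<close> is an endomorphism of the shuffle
  algebra, so it commutes with Wiener--Fliess composition:
  \<open>(d \<circ> c) ~\<circ> \<delta>\<^sub>g = d \<circ> (c ~\<circ> \<delta>\<^sub>g)\<close>.  For proper \<open>c\<close>, Wiener--Fliess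
  composition turns Cauchy products into shuffle products, so \<open>d\<^sup>-\<^sup>1 \<circ> c\<close> is the
  shuffle inverse of \<open>d \<circ> c\<close>.  Hence \<open>h = (d\<^sup>-\<^sup>1 \<circ> c)\<^sup>\<circ>\<^sup>-\<^sup>1\<close> satisfies
  \<open>h = (d \<circ> c) ~\<circ> \<delta>\<^sub>h = d \<circ> (c ~\<circ> \<delta>\<^sub>h)\<close>, i.e. \<open>c ~\<circ> \<delta>\<^sub>h\<close> is a fixed point of
  \<open>e \<mapsto> c ~\<circ> \<delta>\<^bsub>d \<circ> e\<^esub>\<close>.  All the inverses and fixed points involved exist and are
  unique by contraction: the coefficient at a word (or monomial) only depends on
  coefficients at shorter words (or monomials of smaller degree).\<close>

subsection \<open>The shuffle algebra\<close>

definition left_shift :: "nat \<Rightarrow> ncs \<Rightarrow> ncs" where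
  "left_shift k a = (\<lambda>w. a (k # w))"

lemma sum_Pow_lessThan_Suc:
  "(\<Sum>S\<in>Pow {..<Suc n}. F S) =
     (\<Sum>T\<in>Pow {..<n}. F (Suc ` T)) + (\<Sum>T\<in>Pow {..<n}. F (insert 0 (Suc ` T)))"
proof -
  have Pow_Suc: "Pow (Suc ` {..<n}) = image Suc ` Pow {..<n}"
    using image_Pow_surj[of Suc "{..<n}" "Suc ` {..<n}"] by simp
  have inj: "inj_on (image Suc) (Pow {..<n})"
    by (rule inj_on_image_Pow) simp
  have "Pow {..<Suc n} = Pow (Suc ` {..<n}) \<union> insert 0 ` Pow (Suc ` {..<n})"
    unfolding lessThan_Suc_eq_insert_0 by (rule Pow_insert)
  then have "(\<Sum>S\<in>Pow {..<Suc n}. F S) =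
      (\<Sum>S\<in>Pow (Suc ` {..<n}). F S) + (\<Sum>S\<in>insert 0 ` Pow (Suc ` {..<n}). F S)"
    by (simp, subst sum.union_disjoint) auto
  moreover have "inj_on (insert 0) (Pow (Suc ` {..<n}))"
    unfolding inj_on_def by (metis Pow_iff image_iff insert_ident nat.distinct(1) subsetD)
  ultimately have "(\<Sum>S\<in>Pow {..<Suc n}. F S) =
      (\<Sum>S\<in>Pow (Suc ` {..<n}). F S) + (\<Sum>S\<in>Pow (Suc ` {..<n}). F (insert 0 S))"
    by (simp add: sum.reindex)
  then show ?thesis
    unfolding Pow_Suc by (simp add: sum.reindex[OF inj])
qed

lemma nths_Cons_image_Suc: "nths (k # w) (Suc ` T) = nths w T"
  and nths_Cons_insert_0_image_Suc: "nths (k # w) (insert 0 (Suc ` T)) = k # nths w T"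
  and nths_Cons_Compl_image_Suc: "nths (k # w) (- (Suc ` T)) = k # nths w (- T)"
  and nths_Cons_Compl_insert_0_image_Suc: "nths (k # w) (- insert 0 (Suc ` T)) = nths w (- T)"
  by (simp_all add: nths_Cons inj_image_mem_iff flip: Compl_eq)

lemma length_nths_Compl: "length (nths w S) + length (nths w (- S)) = length w"
proof (induction w arbitrary: S)
  case (Cons k w)
  show ?case using Cons[of "{j. Suc j \<in> S}"] by (simp add: nths_Cons Compl_eq)
qed simp

lemma length_nths_Compl_less:
  assumes "S \<subseteq> {..<length w}" and "S \<noteq> {}"
  shows "length (nths w (- S)) < length w"
proof -
  have "{i. i < length w \<and> i \<in> S} \<noteq> {}"
    using assms by blast
  then have "0 < length (nths w S)"
    by (simp add: length_nths card_gt_0_iff)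
  then show ?thesis
    using length_nths_Compl[of w S] by linarith
qed

lemma set_nths_Compl: "set (nths w S) \<union> set (nths w (- S)) = set w"
  by (auto simp: set_nths in_set_conv_nth) (metis ComplI)

lemma shuffle_Nil: "shuffle a b [] = a [] * b []"
  by (simp add: shuffle_def)

lemma shuffle_Cons:
  "shuffle a b (k # w) = shuffle (left_shift k a) b w + shuffle a (left_shift k b) w"
  unfolding shuffle_def left_shift_def
  by (simp add: sum_Pow_lessThan_Suc nths_Cons_image_Suc nths_Cons_insert_0_image_Suc
      nths_Cons_Compl_image_Suc nths_Cons_Compl_insert_0_image_Suc add.commute)

lemma left_shift_shuffle:
  "left_shift k (shuffle a b) = (\<lambda>w. shuffle (left_shift k a) b w + shuffle a (left_shift k b) w)"
  by (simp add: left_shift_def shuffle_Cons)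

lemma shuffle_add_left: "shuffle (\<lambda>v. a v + b v) c w = shuffle a c w + shuffle b c w"
  and shuffle_add_right: "shuffle c (\<lambda>v. a v + b v) w = shuffle c a w + shuffle c b w"
  and shuffle_scale_left: "shuffle (\<lambda>v. r * a v) b w = r * shuffle a b w"
  and shuffle_scale_right: "shuffle a (\<lambda>v. r * b v) w = r * shuffle a b w"
  and shuffle_sum_left: "shuffle (\<lambda>v. \<Sum>x\<in>X. f x v) b w = (\<Sum>x\<in>X. shuffle (f x) b w)"
  and shuffle_sum_right: "shuffle a (\<lambda>v. \<Sum>x\<in>X. f x v) w = (\<Sum>x\<in>X. shuffle a (f x) w)"
  and shuffle_zero_left: "shuffle (\<lambda>v. 0) b w = 0"
  unfolding shuffle_def
  by (simp_all add: sum.distrib algebra_simps sum_distrib_left sum_distrib_right sum.swap[of _ X])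

lemma shuffle_one_left: "shuffle one_s b = b"
proof
  fix w show "shuffle one_s b w = b w"
  proof (induction w arbitrary: b)
    case (Cons k w)
    have "left_shift k one_s = (\<lambda>v. 0)"
      by (simp add: left_shift_def one_s_def)
    with Cons show ?case
      by (simp add: shuffle_Cons shuffle_zero_left) (simp add: left_shift_def)
  qed (simp add: shuffle_Nil one_s_def)
qed

lemma shuffle_commute: "shuffle a b = shuffle b a"
proof
  fix w show "shuffle a b w = shuffle b a w"
    by (induction w arbitrary: a b) (simp_all add: shuffle_Nil shuffle_Cons)
qed

lemma shuffle_assoc: "shuffle (shuffle a b) c = shuffle a (shuffle b c)"
proof
  fix w show "shuffle (shuffle a b) c w = shuffle a (shuffle b c) w"
    by (induction w arbitrary: a b c)
      (simp_all add: shuffle_Nil shuffle_Cons left_shift_shuffle shuffle_add_left shuffle_add_right)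
qed

lemma shuffle_left_commute: "shuffle a (shuffle b c) = shuffle b (shuffle a c)"
  by (metis shuffle_assoc shuffle_commute)

definition word_below :: "nat list \<Rightarrow> nat list \<Rightarrow> bool" where
  "word_below v w \<longleftrightarrow> set v \<subseteq> set w \<and> length v \<le> length w"

lemma word_below_refl: "word_below w w"
  by (simp add: word_below_def)

lemma word_below_trans: "word_below u v \<Longrightarrow> word_below v w \<Longrightarrow> word_below u w"
  by (auto simp: word_below_def)

lemma word_below_nths: "word_below (nths w S) w"
  using length_nths_Compl[of w S] by (simp add: word_below_def set_nths_subset)

lemma shuffle_cong:
  assumes "\<And>v. word_below v w \<Longrightarrow> a v = a' v" and "\<And>v. word_below v w \<Longrightarrow> b v = b' v"
  shows "shuffle a b w = shuffle a' b' w"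
  unfolding shuffle_def by (rule sum.cong) (auto simp: assms word_below_nths)

lemma shuffle_nonzero_split:
  assumes "shuffle a b w \<noteq> 0"
  obtains S where "a (nths w S) \<noteq> 0" and "b (nths w (- S)) \<noteq> 0"
  using assms unfolding shuffle_def by (metis (no_types, lifting) mult_not_zero sum.neutral)

lemma shuffle_nonzero_length:
  assumes "\<And>v. a v \<noteq> 0 \<Longrightarrow> p \<le> length v" and "\<And>v. b v \<noteq> 0 \<Longrightarrow> r \<le> length v"
    and "shuffle a b w \<noteq> 0"
  shows "p + r \<le> length w"
proof -
  obtain S where "a (nths w S) \<noteq> 0" and "b (nths w (- S)) \<noteq> 0"
    using assms(3) by (rule shuffle_nonzero_split)
  then have "p \<le> length (nths w S)" and "r \<le> length (nths w (- S))"
    using assms(1,2) by blast+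
  then show ?thesis
    using length_nths_Compl[of w S] by linarith
qed

subsection \<open>Fixed points of contractive maps\<close>

lemma adm_wf_fixpoint_unique:
  assumes "wf R" and "adm_wf R T"
  shows "\<exists>!h. h = T h"
proof
  show "wfrec R T = T (wfrec R T)"
    using assms by (rule wfrec_fixpoint)
next
  fix h assume h: "h = T h"
  show "h = wfrec R T"
  proof
    fix x show "h x = wfrec R T x"
    proof (induction x rule: wf_induct_rule[OF \<open>wf R\<close>])
      case (1 x)
      then have "T h x = T (wfrec R T) x"
        using \<open>adm_wf R T\<close> unfolding adm_wf_def by blast
      then show ?case
        using h wfrec_fixpoint[OF assms] by metis
    qed
  qed
qed

lemma contractive_fixpoint_unique:
  fixes T :: "('a \<Rightarrow> 'b) \<Rightarrow> 'a \<Rightarrow> 'b" and sz :: "'a \<Rightarrow> nat"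
  assumes "\<And>f f' x. (\<And>y. sz y < sz x \<Longrightarrow> f y = f' y) \<Longrightarrow> T f x = T f' x"
  shows "\<exists>!h. h = T h"
proof (rule adm_wf_fixpoint_unique)
  show "adm_wf (measure sz) T"
    unfolding adm_wf_def in_measure using assms by blast
qed simp

lemma contractive_fixpoint_unique_indexed:
  fixes T :: "('i \<Rightarrow> 'a \<Rightarrow> 'b) \<Rightarrow> 'i \<Rightarrow> 'a \<Rightarrow> 'b" and sz :: "'a \<Rightarrow> nat"
  assumes contr: "\<And>f f' i x. (\<And>j y. sz y < sz x \<Longrightarrow> f j y = f' j y) \<Longrightarrow> T f i x = T f' i x"
  shows "\<exists>!h. h = T h"
proof -
  define T' where "T' F = case_prod (T (curry F))" for F
  have "\<exists>!F. F = T' F"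
  proof (rule contractive_fixpoint_unique[where sz="sz \<circ> snd"])
    fix F F' :: "'i \<times> 'a \<Rightarrow> 'b" and p :: "'i \<times> 'a"
    assume F: "\<And>y. (sz \<circ> snd) y < (sz \<circ> snd) p \<Longrightarrow> F y = F' y"
    obtain i x where p: "p = (i, x)"
      by (cases p)
    have "T (curry F) i x = T (curry F') i x"
      by (rule contr) (simp add: F p)
    then show "T' F p = T' F' p"
      by (simp add: T'_def p)
  qed
  then obtain F where F: "F = T' F" and F_unique: "\<And>G. G = T' G \<Longrightarrow> G = F"
    by blast
  have fixpoint_iff: "h = T h \<longleftrightarrow> case_prod h = T' (case_prod h)" for h
    by (simp add: T'_def fun_eq_iff split_paired_all)
  show ?thesis
  proof
    show "curry F = T (curry F)"
      using F fixpoint_iff[of "curry F"] by simp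
  next
    fix h assume "h = T h"
    then have "case_prod h = F"
      using F_unique fixpoint_iff by blast
    then show "h = curry F"
      by auto
  qed
qed

subsection \<open>Mixed composition as a shuffle algebra endomorphism\<close>

definition shuffle_factor :: "vncs \<Rightarrow> nat \<Rightarrow> ncs" where
  "shuffle_factor g i = (if i = 0 then one_s else g i)"

lemma prepend_Nil [simp]: "prepend i s [] = 0"
  and prepend_Cons [simp]: "prepend i s (k # w) = (if k = i then s w else 0)"
  by (simp_all add: prepend_def)

lemma phi_Cons: "phi g (i # eta) = prepend i (shuffle (shuffle_factor g i) (phi g eta))"
  by (simp add: shuffle_factor_def shuffle_one_left)

declare phi.simps(2) [simp del]

lemma phi_Cons_Nil [simp]: "phi g (i # eta) [] = 0"
  by (simp add: phi_Cons)

lemma phi_Cons_Cons: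
  "phi g (i # eta) (k # w) = (if k = i then shuffle (shuffle_factor g i) (phi g eta) w else 0)"
  by (simp add: phi_Cons)

lemma phi_nonzero_word_below: "phi g eta w \<noteq> 0 \<Longrightarrow> word_below eta w"
proof (induction eta arbitrary: w)
  case (Cons i eta)
  then obtain w' where w: "w = i # w'" and "shuffle (shuffle_factor g i) (phi g eta) w' \<noteq> 0"
    by (cases w) (auto simp: phi_Cons_Cons split: if_splits)
  from this(2) obtain S where "phi g eta (nths w' (- S)) \<noteq> 0"
    by (rule shuffle_nonzero_split)
  then have "word_below eta w'"
    using Cons.IH word_below_nths word_below_trans by blast
  then show ?case
    by (auto simp: word_below_def w)
qed (simp add: word_below_def)

lemma phi_cong_shorter:
  assumes "\<And>j v. length v < length w \<Longrightarrow> g j v = g' j v"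
  shows "phi g eta w = phi g' eta w"
  using assms
proof (induction eta arbitrary: w)
  case (Cons i eta)
  show ?case
  proof (cases w)
    case (Cons k w')
    have "shuffle (shuffle_factor g i) (phi g eta) w' = shuffle (shuffle_factor g' i) (phi g' eta) w'"
    proof (rule shuffle_cong)
      fix v assume "word_below v w'"
      then have "length v < length w"
        by (simp add: word_below_def Cons)
      then show "shuffle_factor g i v = shuffle_factor g' i v" and "phi g eta v = phi g' eta v"
        using Cons.prems by (auto simp: shuffle_factor_def intro!: Cons.IH)
    qed
    then show ?thesis
      by (simp add: Cons phi_Cons_Cons)
  qed simp
qed simp

definition words :: "nat set \<Rightarrow> nat \<Rightarrow> nat list set" where
  "words A n = {eta. set eta \<subseteq> A \<and> length eta \<le> n}"

lemma finite_words: "finite A \<Longrightarrow> finite (words A n)"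
  unfolding words_def by (rule finite_lists_length_le)

text \<open>The substitution \<open>a \<mapsto> a ~\<circ> \<delta>\<^sub>g\<close> for a single scalar series \<open>a\<close>, over the
  alphabet of the word at hand rather than a fixed \<open>{x\<^sub>0, \<dots>, x\<^sub>m}\<close>.\<close>

definition mixcomp_s :: "vncs \<Rightarrow> ncs \<Rightarrow> ncs" where
  "mixcomp_s g a w = (\<Sum>eta\<in>words (set w) (length w). a eta * phi g eta w)"

lemma mixcomp_s_eq_sum_words:
  assumes "finite A" and "set w \<subseteq> A" and "length w \<le> n"
  shows "mixcomp_s g a w = (\<Sum>eta\<in>words A n. a eta * phi g eta w)"
  unfolding mixcomp_s_def
proof (rule sum.mono_neutral_left)
  show "finite (words A n)"
    using assms(1) by (rule finite_words)
  show "words (set w) (length w) \<subseteq> words A n"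
    using assms by (auto simp: words_def)
  show "\<forall>eta\<in>words A n - words (set w) (length w). a eta * phi g eta w = 0"
    using phi_nonzero_word_below by (force simp: words_def word_below_def)
qed

lemma mixcomp_eq_mixcomp_s:
  assumes "j \<in> {1..l}" and "set w \<subseteq> {0..m}"
  shows "mixcomp l m c g j w = mixcomp_s g (c j) w"
  using assms mixcomp_s_eq_sum_words[of "{0..m}" w "length w" g "c j"]
  by (simp add: mixcomp_def words_def)

lemma mixcomp_s_add: "mixcomp_s g (\<lambda>v. a v + b v) = (\<lambda>w. mixcomp_s g a w + mixcomp_s g b w)"
  unfolding mixcomp_s_def by (simp add: distrib_right sum.distrib)

lemma mixcomp_s_one: "mixcomp_s g one_s = one_s"
proof
  fix w
  have "mixcomp_s g one_s w =
      (\<Sum>eta\<in>words (set w) (length w). if eta = [] then phi g [] w else 0)"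
    unfolding mixcomp_s_def by (rule sum.cong) (auto simp: one_s_def)
  also have "\<dots> = phi g [] w"
    by (subst sum.delta) (auto simp: finite_words words_def finite_lists_length_le)
  finally show "mixcomp_s g one_s w = one_s w"
    by simp
qed

lemma mixcomp_s_Nil: "mixcomp_s g a [] = a []"
proof -
  have "words {} 0 = {[]}"
    by (auto simp: words_def)
  then show ?thesis
    by (simp add: mixcomp_s_def one_s_def)
qed

lemma sum_words_Suc_phi_Cons:
  assumes "finite A" and "k \<in> A"
  shows "(\<Sum>eta\<in>words A (Suc n). a eta * phi g eta (k # w)) =
    (\<Sum>eta\<in>words A n. a (k # eta) * phi g (k # eta) (k # w))"
proof -
  have "(\<Sum>eta\<in>words A (Suc n). a eta * phi g eta (k # w)) =
      (\<Sum>eta\<in>Cons k ` words A n. a eta * phi g eta (k # w))"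
  proof (rule sum.mono_neutral_right)
    show "finite (words A (Suc n))"
      using assms(1) by (rule finite_words)
    show "Cons k ` words A n \<subseteq> words A (Suc n)"
      using assms(2) by (auto simp: words_def)
    show "\<forall>eta\<in>words A (Suc n) - Cons k ` words A n. a eta * phi g eta (k # w) = 0"
    proof
      fix eta assume eta: "eta \<in> words A (Suc n) - Cons k ` words A n"
      show "a eta * phi g eta (k # w) = 0"
      proof (cases eta)
        case (Cons i eta')
        then have "i \<noteq> k"
          using eta by (auto simp: words_def)
        then show ?thesis
          by (simp add: Cons phi_Cons_Cons)
      qed (simp add: one_s_def)
    qed
  qed
  then show ?thesis
    by (simp add: sum.reindex)
qed

lemma mixcomp_s_Cons:
  "mixcomp_s g a (k # w) = shuffle (shuffle_factor g k) (mixcomp_s g (left_shift k a)) w"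
proof -
  define A where "A = insert k (set w)"
  define n where "n = length w"
  have A: "finite A"
    by (simp add: A_def)
  have "mixcomp_s g a (k # w) = (\<Sum>eta\<in>words A n. a (k # eta) * phi g (k # eta) (k # w))"
    using sum_words_Suc_phi_Cons[OF A] by (simp add: mixcomp_s_def A_def n_def)
  also have "\<dots> = shuffle (shuffle_factor g k) (\<lambda>v. \<Sum>eta\<in>words A n. a (k # eta) * phi g eta v) w"
    by (simp add: phi_Cons_Cons shuffle_scale_right shuffle_sum_right)
  also have "\<dots> = shuffle (shuffle_factor g k) (mixcomp_s g (left_shift k a)) w"
  proof (rule shuffle_cong)
    fix v assume "word_below v w"
    then have "set v \<subseteq> A" and "length v \<le> n"
      by (auto simp: word_below_def A_def n_def)
    then show "(\<Sum>eta\<in>words A n. a (k # eta) * phi g eta v) = mixcomp_s g (left_shift k a) v"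
      using mixcomp_s_eq_sum_words[OF A] by (simp add: left_shift_def)
  qed simp
  finally show ?thesis .
qed

lemma left_shift_mixcomp_s:
  "left_shift k (mixcomp_s g a) = shuffle (shuffle_factor g k) (mixcomp_s g (left_shift k a))"
  by (simp add: left_shift_def mixcomp_s_Cons)

text \<open>Both sides obey the same recursion under \<open>left_shift\<close>, which is a derivation of
  the shuffle product.\<close>

lemma mixcomp_s_shuffle: "mixcomp_s g (shuffle a b) = shuffle (mixcomp_s g a) (mixcomp_s g b)"
proof
  fix w show "mixcomp_s g (shuffle a b) w = shuffle (mixcomp_s g a) (mixcomp_s g b) w"
  proof (induction "length w" arbitrary: w a b rule: less_induct)
    case less
    show ?case
    proof (cases w)
      case (Cons k w')
      let ?F = "shuffle_factor g k" and ?M = "mixcomp_s g"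
      have "?M (shuffle a b) w =
          shuffle ?F (\<lambda>v. ?M (shuffle (left_shift k a) b) v + ?M (shuffle a (left_shift k b)) v) w'"
        by (simp add: Cons mixcomp_s_Cons left_shift_shuffle mixcomp_s_add)
      also have "\<dots> = shuffle ?F (\<lambda>v. shuffle (?M (left_shift k a)) (?M b) v
                                     + shuffle (?M a) (?M (left_shift k b)) v) w'"
      proof (rule shuffle_cong)
        fix v assume "word_below v w'"
        then have "length v < length w"
          by (simp add: word_below_def Cons)
        then show "?M (shuffle (left_shift k a) b) v + ?M (shuffle a (left_shift k b)) v =
            shuffle (?M (left_shift k a)) (?M b) v + shuffle (?M a) (?M (left_shift k b)) v"
          using less by simp
      qed simp
      also have "\<dots> = shuffle (?M a) (?M b) w"
        by (simp add: Cons shuffle_Cons left_shift_mixcomp_s shuffle_add_right shuffle_assoc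
            shuffle_left_commute[of "?M a"])
      finally show ?thesis .
    qed (simp add: mixcomp_s_Nil shuffle_Nil)
  qed
qed

subsection \<open>Shuffle monomials and the Wiener--Fliess composition\<close>

declare upt_Suc [simp del]

lemma mixcomp_s_shpow: "mixcomp_s g (shpow s n) = shpow (mixcomp_s g s) n"
  by (induction n) (simp_all add: mixcomp_s_one mixcomp_s_shuffle)

lemma mixcomp_s_shmon: "mixcomp_s g (shmon e alpha js) = shmon (\<lambda>j. mixcomp_s g (e j)) alpha js"
  by (induction js) (simp_all add: mixcomp_s_one mixcomp_s_shuffle mixcomp_s_shpow)

lemma shpow_cong:
  "(\<And>v. word_below v w \<Longrightarrow> s v = s' v) \<Longrightarrow> shpow s n w = shpow s' n w"
proof (induction n arbitrary: w)
  case (Suc n)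
  show ?case
    unfolding shpow.simps by (rule shuffle_cong) (use Suc word_below_trans in blast)+
qed simp

lemma shmon_cong:
  "(\<And>j v. j \<in> set js \<Longrightarrow> word_below v w \<Longrightarrow> e j v = e' j v) \<Longrightarrow>
    shmon e alpha js w = shmon e' alpha js w"
proof (induction js arbitrary: w)
  case (Cons j js)
  show ?case
    unfolding shmon.simps
  proof (rule shuffle_cong)
    fix v assume v: "word_below v w"
    show "shpow (e j) (alpha j) v = shpow (e' j) (alpha j) v"
      by (rule shpow_cong) (use Cons.prems v word_below_trans in auto)
    show "shmon e alpha js v = shmon e' alpha js v"
      by (rule Cons.IH) (use Cons.prems v word_below_trans in auto)
  qed
qed simp

lemma shpow_add: "shuffle (shpow s n) (shpow s k) = shpow s (n + k)"
  by (induction n) (simp_all add: shuffle_one_left shuffle_assoc)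

lemma shmon_add:
  "shuffle (shmon e alpha js) (shmon e beta js) = shmon e (\<lambda>j. alpha j + beta j) js"
proof (induction js)
  case (Cons j js)
  have swap: "shuffle (shuffle a b) (shuffle c d) = shuffle (shuffle a c) (shuffle b d)" for a b c d
    by (metis shuffle_assoc shuffle_left_commute)
  show ?case
    unfolding shmon.simps by (subst swap) (simp add: Cons shpow_add)
qed (simp add: shuffle_one_left)

lemma shpow_nonzero_length:
  assumes "s [] = 0" and "shpow s n v \<noteq> 0"
  shows "n \<le> length v"
  using assms(2)
proof (induction n arbitrary: v)
  case (Suc n)
  have "1 + n \<le> length v"
  proof (rule shuffle_nonzero_length[of s _ "shpow s n"])
    show "1 \<le> length u" if "s u \<noteq> 0" for u
      using that assms(1) by (cases u) auto
  qed (use Suc in auto)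
  then show ?case
    by simp
qed simp

lemma shmon_nonzero_length:
  assumes "\<forall>j\<in>set js. e j [] = 0" and "shmon e alpha js v \<noteq> 0"
  shows "sum_list (map alpha js) \<le> length v"
  using assms
proof (induction js arbitrary: v)
  case (Cons j js)
  have "alpha j + sum_list (map alpha js) \<le> length v"
    by (rule shuffle_nonzero_length[of "shpow (e j) (alpha j)" _ "shmon e alpha js"])
      (use Cons shpow_nonzero_length[of "e j" "alpha j"] in auto)
  then show ?case
    by simp
qed simp

abbreviation mon_one :: "nat \<Rightarrow> nat" where
  "mon_one \<equiv> \<lambda>_. 0"

definition mdeg :: "nat \<Rightarrow> (nat \<Rightarrow> nat) \<Rightarrow> nat" where
  "mdeg q alpha = (\<Sum>j\<in>{1..q}. alpha j)"

definition mons_deg_le :: "nat \<Rightarrow> nat \<Rightarrow> (nat \<Rightarrow> nat) set" where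
  "mons_deg_le q N = {alpha \<in> mons q. mdeg q alpha \<le> N}"

lemma shmon_mon_one: "shmon e mon_one js = one_s"
  by (induction js) (simp_all add: shuffle_one_left)

lemma mdeg_add: "mdeg q (\<lambda>j. alpha j + beta j) = mdeg q alpha + mdeg q beta"
  by (simp add: mdeg_def sum.distrib)

lemma member_le_mdeg: "j \<in> {1..q} \<Longrightarrow> alpha j \<le> mdeg q alpha"
  unfolding mdeg_def by (rule member_le_sum) auto

lemma finite_mons_deg_le: "finite (mons_deg_le q N)"
proof (rule finite_subset)
  show "mons_deg_le q N \<subseteq>
      {f. \<forall>x. (x \<in> {1..q} \<longrightarrow> f x \<in> {0..N}) \<and> (x \<notin> {1..q} \<longrightarrow> f x = 0)}"
    using member_le_mdeg by (fastforce simp: mons_deg_le_def mons_def intro: le_trans)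
qed (rule finite_set_of_finite_funs; simp)

lemma shmon_upt_nonzero_mdeg:
  assumes "\<forall>j\<in>{1..q}. e j [] = 0" and "shmon e alpha [1..<q+1] v \<noteq> 0"
  shows "mdeg q alpha \<le> length v"
proof -
  have "sum_list (map alpha [1..<q+1]) = mdeg q alpha"
    by (simp add: mdeg_def sum_list_distinct_conv_sum_set atLeastLessThanSuc_atLeastAtMost)
  with shmon_nonzero_length[of "[1..<q+1]" e alpha v] assms show ?thesis
    by auto
qed

lemma wfcomp_eq_sum_mons_deg_le:
  assumes e: "\<forall>j\<in>{1..q}. e j [] = 0" and i: "i \<in> {1..m}"
    and v: "set v \<subseteq> {0..m}" "length v \<le> N"
  shows "wfcomp m q d e i v = (\<Sum>alpha\<in>mons_deg_le q N. d i alpha * shmon e alpha [1..<q+1] v)"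
proof -
  have "wfcomp m q d e i v =
      (\<Sum>alpha\<in>mons_deg_le q (length v). d i alpha * shmon e alpha [1..<q+1] v)"
    using i v by (simp add: wfcomp_def mons_deg_le_def mdeg_def)
  also have "\<dots> = (\<Sum>alpha\<in>mons_deg_le q N. d i alpha * shmon e alpha [1..<q+1] v)"
  proof (rule sum.mono_neutral_left)
    show "finite (mons_deg_le q N)"
      by (rule finite_mons_deg_le)
    show "mons_deg_le q (length v) \<subseteq> mons_deg_le q N"
      using v by (auto simp: mons_deg_le_def)
    show "\<forall>alpha\<in>mons_deg_le q N - mons_deg_le q (length v).
        d i alpha * shmon e alpha [1..<q+1] v = 0"
      using shmon_upt_nonzero_mdeg[of q e, OF e] by (force simp: mons_deg_le_def)
  qed
  finally show ?thesis .
qed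

lemma wfcomp_mixcomp:
  assumes c: "\<forall>j\<in>{1..q}. c j [] = 0"
  shows "wfcomp m q d (mixcomp q m c g) = mixcomp m m (wfcomp m q d c) g"
proof (intro ext)
  fix i w
  show "wfcomp m q d (mixcomp q m c g) i w = mixcomp m m (wfcomp m q d c) g i w"
  proof (cases "i \<in> {1..m} \<and> set w \<subseteq> {0..m}")
    case True
    then have i: "i \<in> {1..m}" and w: "set w \<subseteq> {0..m}"
      by auto
    let ?A = "mons_deg_le q (length w)" and ?W = "words {0..m} (length w)"
    let ?S = "\<lambda>alpha. shmon c alpha [1..<q+1]"
    have shmon_mixcomp: "shmon (mixcomp q m c g) alpha [1..<q+1] w = mixcomp_s g (?S alpha) w"
      for alpha
    proof -
      have "shmon (mixcomp q m c g) alpha [1..<q+1] w = shmon (\<lambda>j. mixcomp_s g (c j)) alpha [1..<q+1] w"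
        by (rule shmon_cong) (use w in \<open>auto simp: word_below_def intro!: mixcomp_eq_mixcomp_s\<close>)
      then show ?thesis
        by (simp add: mixcomp_s_shmon)
    qed
    have "wfcomp m q d (mixcomp q m c g) i w =
        (\<Sum>alpha\<in>?A. d i alpha * shmon (mixcomp q m c g) alpha [1..<q+1] w)"
      using True by (simp add: wfcomp_def mons_deg_le_def mdeg_def)
    also have "\<dots> = (\<Sum>alpha\<in>?A. d i alpha * mixcomp_s g (?S alpha) w)"
      by (simp only: shmon_mixcomp)
    also have "\<dots> = (\<Sum>alpha\<in>?A. d i alpha * (\<Sum>eta\<in>?W. ?S alpha eta * phi g eta w))"
      using mixcomp_s_eq_sum_words[of "{0..m}" w "length w" g] w by simp
    also have "\<dots> = (\<Sum>eta\<in>?W. (\<Sum>alpha\<in>?A. d i alpha * ?S alpha eta) * phi g eta w)"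
      by (simp add: sum_distrib_left sum_distrib_right sum.swap[of _ ?A] mult.assoc)
    also have "\<dots> = (\<Sum>eta\<in>?W. wfcomp m q d c i eta * phi g eta w)"
      by (rule sum.cong) (use wfcomp_eq_sum_mons_deg_le[of q c, OF c i] in \<open>auto simp: words_def\<close>)
    also have "\<dots> = mixcomp m m (wfcomp m q d c) g i w"
      using True by (simp add: mixcomp_def words_def)
    finally show ?thesis .
  qed (auto simp: wfcomp_def mixcomp_def)
qed

subsection \<open>The Cauchy inverse\<close>

definition mon_divisors :: "(nat \<Rightarrow> nat) \<Rightarrow> (nat \<Rightarrow> nat) set" where
  "mon_divisors alpha = {beta. \<forall>j. beta j \<le> alpha j}"

lemma mon_divisors_mons:
  assumes "alpha \<in> mons q" and "beta \<in> mon_divisors alpha"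
  shows "beta \<in> mons q"
proof -
  have "beta j = 0" if "j \<notin> {1..q}" for j
  proof -
    have "beta j \<le> alpha j"
      using assms(2) by (simp add: mon_divisors_def)
    moreover have "alpha j = 0"
      using assms(1) that by (simp add: mons_def)
    ultimately show ?thesis
      by simp
  qed
  then show ?thesis
    by (simp add: mons_def)
qed

lemma mon_divisors_subset_mons_deg_le:
  assumes "alpha \<in> mons q"
  shows "mon_divisors alpha \<subseteq> mons_deg_le q (mdeg q alpha)"
proof
  fix beta assume beta: "beta \<in> mon_divisors alpha"
  then have "mdeg q beta \<le> mdeg q alpha"
    unfolding mdeg_def by (intro sum_mono) (simp add: mon_divisors_def)
  with mon_divisors_mons[OF assms beta] show "beta \<in> mons_deg_le q (mdeg q alpha)"
    by (simp add: mons_deg_le_def)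
qed

lemma finite_mon_divisors: "alpha \<in> mons q \<Longrightarrow> finite (mon_divisors alpha)"
  using mon_divisors_subset_mons_deg_le finite_mons_deg_le by (rule finite_subset)

lemma mdeg_diff_less:
  assumes "alpha \<in> mons q" and beta: "beta \<in> mon_divisors alpha" "beta \<noteq> mon_one"
  shows "mdeg q (\<lambda>j. alpha j - beta j) < mdeg q alpha"
proof -
  have "\<exists>j. beta j \<noteq> 0"
    using beta(2) by (simp add: fun_eq_iff)
  then obtain j where j: "beta j \<noteq> 0"
    by blast
  have "beta \<in> mons q"
    using assms(1) beta(1) by (rule mon_divisors_mons)
  with j have "j \<in> {1..q}"
    by (auto simp: mons_def)
  with j have pos: "0 < mdeg q beta"
    using member_le_mdeg[of j q beta] by linarith
  have "(\<lambda>j. alpha j - beta j + beta j) = alpha"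
    using beta(1) by (simp add: mon_divisors_def fun_eq_iff)
  then have "mdeg q (\<lambda>j. alpha j - beta j) + mdeg q beta = mdeg q alpha"
    using mdeg_add[of q "\<lambda>j. alpha j - beta j" beta] by simp
  with pos show ?thesis
    by linarith
qed

lemma cprod_eq_sum_mon_divisors:
  "cprod a b alpha = (\<Sum>beta\<in>mon_divisors alpha. a beta * b (\<lambda>j. alpha j - beta j))"
  by (simp add: cprod_def mon_divisors_def)

lemma cprod_split_mon_one:
  assumes "alpha \<in> mons q"
  shows "cprod a b alpha = a mon_one * b alpha +
     (\<Sum>beta\<in>mon_divisors alpha - {mon_one}. a beta * b (\<lambda>j. alpha j - beta j))"
proof -
  have "mon_one \<in> mon_divisors alpha"
    by (simp add: mon_divisors_def)
  then show ?thesis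
    unfolding cprod_eq_sum_mon_divisors
    using sum.remove[OF finite_mon_divisors[OF assms], of mon_one "\<lambda>beta. a beta * b (\<lambda>j. alpha j - beta j)"]
    by simp
qed

definition is_cinv_s :: "nat \<Rightarrow> cs \<Rightarrow> cs \<Rightarrow> bool" where
  "is_cinv_s q a b \<longleftrightarrow> (\<forall>alpha. alpha \<notin> mons q \<longrightarrow> b alpha = 0) \<and>
     (\<forall>alpha\<in>mons q. cprod a b alpha = (if alpha = mon_one then 1 else 0))"

text \<open>Solving \<open>cprod a b alpha = [alpha = 1]\<close> for the coefficient \<open>b alpha\<close>, the one
  term of the convolution in which it occurs.\<close>

definition cinv_step :: "nat \<Rightarrow> cs \<Rightarrow> cs \<Rightarrow> cs" where
  "cinv_step q a b alpha = (if alpha \<in> mons q then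
     ((if alpha = mon_one then 1 else 0) -
       (\<Sum>beta\<in>mon_divisors alpha - {mon_one}. a beta * b (\<lambda>j. alpha j - beta j))) / a mon_one
     else 0)"

lemma is_cinv_s_iff_fixpoint:
  assumes a: "a mon_one \<noteq> 0"
  shows "is_cinv_s q a b \<longleftrightarrow> b = cinv_step q a b"
proof -
  have "cprod a b alpha = (if alpha = mon_one then 1 else 0) \<longleftrightarrow> b alpha = cinv_step q a b alpha"
    if "alpha \<in> mons q" for alpha
    using that a cprod_split_mon_one[OF that, of a b] by (auto simp: cinv_step_def field_simps)
  then show ?thesis
    unfolding is_cinv_s_def by (auto simp: fun_eq_iff cinv_step_def)
qed

lemma is_cinv_s_cinv_s:
  assumes a: "a mon_one \<noteq> 0"
  shows "is_cinv_s q a (cinv_s q a)"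
proof -
  have "\<exists>!b. b = cinv_step q a b"
  proof (rule contractive_fixpoint_unique[where sz="mdeg q"])
    fix b b' :: cs and alpha
    assume "\<And>beta. mdeg q beta < mdeg q alpha \<Longrightarrow> b beta = b' beta"
    then show "cinv_step q a b alpha = cinv_step q a b' alpha"
      unfolding cinv_step_def using mdeg_diff_less[of alpha q] by (auto intro!: sum.cong)
  qed
  then have "\<exists>!b. is_cinv_s q a b"
    using is_cinv_s_iff_fixpoint[where a=a, OF a] by simp
  then show ?thesis
    unfolding cinv_s_def is_cinv_s_def[symmetric] by (rule theI')
qed

lemma cprod_cinv_s:
  assumes "a mon_one \<noteq> 0" and "alpha \<in> mons q"
  shows "cprod a (cinv_s q a) alpha = (if alpha = mon_one then 1 else 0)"
  using is_cinv_s_cinv_s[where a=a, OF assms(1)] assms(2) by (simp add: is_cinv_s_def)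

subsection \<open>Cauchy products and shuffle inverses\<close>

lemma sum_pairs_mons_deg_le:
  "(\<Sum>p\<in>{p \<in> mons_deg_le q N \<times> mons_deg_le q N. mdeg q (fst p) + mdeg q (snd p) \<le> N}.
      F (fst p) (snd p)) =
   (\<Sum>gamma\<in>mons_deg_le q N. \<Sum>alpha\<in>mon_divisors gamma. F alpha (\<lambda>j. gamma j - alpha j))"
proof -
  let ?A = "mons_deg_le q N"
  let ?P = "{p \<in> ?A \<times> ?A. mdeg q (fst p) + mdeg q (snd p) \<le> N}"
  have "(\<Sum>p\<in>?P. F (fst p) (snd p)) =
      (\<Sum>p\<in>(SIGMA gamma:?A. mon_divisors gamma). F (snd p) (\<lambda>j. fst p j - snd p j))"
  proof (rule sum.reindex_bij_witness[where j="\<lambda>p. (\<lambda>j. fst p j + snd p j, fst p)"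
                                      and i="\<lambda>p. (snd p, \<lambda>j. fst p j - snd p j)"])
    fix p assume p: "p \<in> (SIGMA gamma:?A. mon_divisors gamma)"
    then have le: "\<forall>j. snd p j \<le> fst p j" and gamma: "fst p \<in> ?A"
      by (auto simp: mon_divisors_def)
    then show "(\<lambda>j. fst (snd p, \<lambda>j. fst p j - snd p j) j + snd (snd p, \<lambda>j. fst p j - snd p j) j,
        fst (snd p, \<lambda>j. fst p j - snd p j)) = p"
      by (simp add: prod_eq_iff fun_eq_iff)
    have "snd p \<in> mons q"
      using gamma p mon_divisors_mons by (auto simp: mons_deg_le_def)
    moreover have "(\<lambda>j. fst p j - snd p j) \<in> mons q"
      using gamma by (auto simp: mons_deg_le_def mons_def)
    moreover have "mdeg q (\<lambda>j. fst p j - snd p j) + mdeg q (snd p) = mdeg q (fst p)"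
      using mdeg_add[of q "\<lambda>j. fst p j - snd p j" "snd p"] le by simp
    ultimately show "(snd p, \<lambda>j. fst p j - snd p j) \<in> ?P"
      using gamma by (auto simp: mons_deg_le_def)
  qed (auto simp: mons_deg_le_def mons_def mon_divisors_def mdeg_add)
  also have "\<dots> = (\<Sum>gamma\<in>?A. \<Sum>alpha\<in>mon_divisors gamma. F alpha (\<lambda>j. gamma j - alpha j))"
    using finite_mons_deg_le finite_mon_divisors
    by (subst sum.Sigma) (auto simp: mons_deg_le_def case_prod_beta)
  finally show ?thesis .
qed

lemma sum_mons_deg_le_cprod:
  fixes f h K :: "(nat \<Rightarrow> nat) \<Rightarrow> real"
  assumes K: "\<And>gamma. gamma \<in> mons q \<Longrightarrow> N < mdeg q gamma \<Longrightarrow> K gamma = 0"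
  shows "(\<Sum>alpha\<in>mons_deg_le q N. \<Sum>beta\<in>mons_deg_le q N. f alpha * h beta * K (\<lambda>j. alpha j + beta j))
       = (\<Sum>gamma\<in>mons_deg_le q N. cprod f h gamma * K gamma)"
proof -
  let ?A = "mons_deg_le q N"
  let ?P = "{p \<in> ?A \<times> ?A. mdeg q (fst p) + mdeg q (snd p) \<le> N}"
  let ?F = "\<lambda>alpha beta. f alpha * h beta * K (\<lambda>j. alpha j + beta j)"
  have "(\<Sum>alpha\<in>?A. \<Sum>beta\<in>?A. ?F alpha beta) = (\<Sum>p\<in>?A \<times> ?A. ?F (fst p) (snd p))"
    by (simp add: sum.cartesian_product case_prod_beta)
  also have "\<dots> = (\<Sum>p\<in>?P. ?F (fst p) (snd p))"
  proof (rule sum.mono_neutral_right)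
    show "\<forall>p\<in>?A \<times> ?A - ?P. ?F (fst p) (snd p) = 0"
    proof
      fix p assume p: "p \<in> ?A \<times> ?A - ?P"
      then have "(\<lambda>j. fst p j + snd p j) \<in> mons q"
        by (auto simp: mons_deg_le_def mons_def)
      moreover have "N < mdeg q (\<lambda>j. fst p j + snd p j)"
        using p by (auto simp: mdeg_add)
      ultimately show "?F (fst p) (snd p) = 0"
        using K by simp
    qed
  qed (use finite_mons_deg_le in auto)
  also have "\<dots> = (\<Sum>gamma\<in>?A. \<Sum>alpha\<in>mon_divisors gamma. ?F alpha (\<lambda>j. gamma j - alpha j))"
    by (rule sum_pairs_mons_deg_le[where F = "?F"])
  also have "\<dots> = (\<Sum>gamma\<in>?A. \<Sum>alpha\<in>mon_divisors gamma. f alpha * h (\<lambda>j. gamma j - alpha j) * K gamma)"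
    by (intro sum.cong refl) (simp add: mon_divisors_def)
  also have "\<dots> = (\<Sum>gamma\<in>?A. cprod f h gamma * K gamma)"
    by (simp add: cprod_eq_sum_mon_divisors sum_distrib_right)
  finally show ?thesis .
qed

lemma wfcomp_nonzero: "wfcomp m q d e i v \<noteq> 0 \<Longrightarrow> i \<in> {1..m} \<and> set v \<subseteq> {0..m}"
  by (simp add: wfcomp_def split: if_splits)

lemma shuffle_wfcomp_nonzero:
  assumes "shuffle (wfcomp m q a e i) (wfcomp m q b e i) w \<noteq> 0"
  shows "i \<in> {1..m} \<and> set w \<subseteq> {0..m}"
proof -
  obtain S where "wfcomp m q a e i (nths w S) \<noteq> 0" and "wfcomp m q b e i (nths w (- S)) \<noteq> 0"
    using assms by (rule shuffle_nonzero_split)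
  then show ?thesis
    using set_nths_Compl[of w S] by (auto dest!: wfcomp_nonzero)
qed

lemma shuffle_wfcomp:
  assumes c: "\<forall>j\<in>{1..q}. c j [] = 0"
  shows "shuffle (wfcomp m q a c i) (wfcomp m q b c i) = wfcomp m q (\<lambda>i. cprod (a i) (b i)) c i"
proof
  fix w
  show "shuffle (wfcomp m q a c i) (wfcomp m q b c i) w = wfcomp m q (\<lambda>i. cprod (a i) (b i)) c i w"
  proof (cases "i \<in> {1..m} \<and> set w \<subseteq> {0..m}")
    case True
    then have i: "i \<in> {1..m}" and w: "set w \<subseteq> {0..m}"
      by auto
    let ?A = "mons_deg_le q (length w)" and ?S = "\<lambda>alpha. shmon c alpha [1..<q+1]"
    have wfcomp_eq: "wfcomp m q d c i v = (\<Sum>alpha\<in>?A. d i alpha * ?S alpha v)"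
      if "word_below v w" for d v
      using that w by (intro wfcomp_eq_sum_mons_deg_le[of q c, OF c i]) (auto simp: word_below_def)
    have "shuffle (wfcomp m q a c i) (wfcomp m q b c i) w =
        shuffle (\<lambda>v. \<Sum>alpha\<in>?A. a i alpha * ?S alpha v) (\<lambda>v. \<Sum>beta\<in>?A. b i beta * ?S beta v) w"
      by (rule shuffle_cong) (simp_all add: wfcomp_eq)
    also have "\<dots> = (\<Sum>alpha\<in>?A. \<Sum>beta\<in>?A. a i alpha * b i beta * shuffle (?S alpha) (?S beta) w)"
      by (simp add: shuffle_sum_left shuffle_sum_right shuffle_scale_left shuffle_scale_right
          sum_distrib_left mult.assoc)
    also have "\<dots> = (\<Sum>alpha\<in>?A. \<Sum>beta\<in>?A. a i alpha * b i beta * ?S (\<lambda>j. alpha j + beta j) w)"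
      by (simp add: shmon_add)
    also have "\<dots> = (\<Sum>gamma\<in>?A. cprod (a i) (b i) gamma * ?S gamma w)"
      by (rule sum_mons_deg_le_cprod) (use shmon_upt_nonzero_mdeg[of q c, OF c] in fastforce)
    also have "\<dots> = wfcomp m q (\<lambda>i. cprod (a i) (b i)) c i w"
      by (simp add: wfcomp_eq word_below_refl)
    finally show ?thesis .
  next
    case False
    then show ?thesis
      using shuffle_wfcomp_nonzero[of m q a c i b w] by (auto simp: wfcomp_def)
  qed
qed

lemma wfcomp_eq_one_s:
  assumes i: "i \<in> {1..m}" and u: "\<forall>alpha\<in>mons q. u i alpha = (if alpha = mon_one then 1 else 0)"
  shows "wfcomp m q u c i = one_s"
proof
  fix w :: "nat list"
  show "wfcomp m q u c i w = one_s w"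
  proof (cases "set w \<subseteq> {0..m}")
    case True
    let ?A = "mons_deg_le q (length w)" and ?S = "\<lambda>alpha. shmon c alpha [1..<q+1]"
    have "wfcomp m q u c i w = (\<Sum>alpha\<in>?A. u i alpha * ?S alpha w)"
      using i True by (simp add: wfcomp_def mons_deg_le_def mdeg_def)
    also have "\<dots> = (\<Sum>alpha\<in>?A. if alpha = mon_one then ?S alpha w else 0)"
      by (rule sum.cong) (auto simp: u mons_deg_le_def)
    also have "\<dots> = ?S mon_one w"
      by (subst sum.delta[OF finite_mons_deg_le]) (simp add: mons_deg_le_def mons_def mdeg_def)
    finally show ?thesis
      by (simp add: shmon_mon_one)
  next
    case False
    then have "w \<noteq> []"
      by auto
    with False show ?thesis
      by (simp add: wfcomp_def one_s_def)
  qed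
qed

text \<open>Isolating the term \<open>S = {}\<close> of the shuffle sum shows that a shuffle inverse of
  \<open>a\<close> is a fixed point of a map that is contractive in the word length.\<close>

lemma shuffle_inverse_unique:
  assumes a: "a [] \<noteq> 0" and "shuffle a b = one_s" and "shuffle a b' = one_s"
  shows "b = b'"
proof -
  define T where "T b w = (one_s w -
      (\<Sum>S\<in>Pow {..<length w} - {{}}. a (nths w S) * b (nths w (- S)))) / a []" for b w
  have "b = T b" if "shuffle a b = one_s" for b
  proof
    fix w
    have "shuffle a b w = a [] * b w + (\<Sum>S\<in>Pow {..<length w} - {{}}. a (nths w S) * b (nths w (- S)))"
      unfolding shuffle_def by (subst sum.remove[of _ "{}"]) (simp_all add: nths_all)
    then show "b w = T b w"
      using that a by (simp add: T_def field_simps)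
  qed
  moreover have "\<exists>!b. b = T b"
  proof (rule contractive_fixpoint_unique[where sz=length])
    fix f f' :: ncs and w :: "nat list"
    assume f: "\<And>v. length v < length w \<Longrightarrow> f v = f' v"
    have "a (nths w S) * f (nths w (- S)) = a (nths w S) * f' (nths w (- S))"
      if "S \<in> Pow {..<length w} - {{}}" for S
      using that by (simp add: f length_nths_Compl_less)
    then show "T f w = T f' w"
      unfolding T_def by (metis (no_types, lifting) sum.cong)
  qed
  ultimately show ?thesis
    using assms(2,3) by blast
qed

lemma shinv_s_eqI:
  assumes "shuffle a b = one_s"
  shows "shinv_s a = b"
proof -
  have "a [] * b [] = 1"
    using assms shuffle_Nil[of a b] by (metis one_s_def)
  then have "a [] \<noteq> 0"
    by auto
  then show ?thesis
    unfolding shinv_s_def using assms shuffle_inverse_unique by blast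
qed

lemma shuffle_wfcomp_cinv:
  assumes c: "\<forall>j\<in>{1..q}. c j [] = 0" and i: "i \<in> {1..m}" and d: "d i mon_one \<noteq> 0"
  shows "shuffle (wfcomp m q d c i) (wfcomp m q (cinv m q d) c i) = one_s"
proof -
  have "\<forall>alpha\<in>mons q. cprod (d i) (cinv m q d i) alpha = (if alpha = mon_one then 1 else 0)"
    using i cprod_cinv_s[where a="d i", OF d] by (simp add: cinv_def)
  then show ?thesis
    unfolding shuffle_wfcomp[of q c, OF c] using i by (rule wfcomp_eq_one_s[rotated])
qed

lemma shinv_wfcomp_cinv:
  assumes c: "\<forall>j\<in>{1..q}. c j [] = 0" and d: "\<forall>i\<in>{1..m}. d i mon_one \<noteq> 0"
  shows "shinv m (wfcomp m q (cinv m q d) c) = wfcomp m q d c"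
proof (intro ext)
  fix i w
  show "shinv m (wfcomp m q (cinv m q d) c) i w = wfcomp m q d c i w"
  proof (cases "i \<in> {1..m}")
    case True
    then have "shinv_s (wfcomp m q (cinv m q d) c i) = wfcomp m q d c i"
      using shuffle_wfcomp_cinv[of q c i m d] c d by (intro shinv_s_eqI) (simp add: shuffle_commute)
    with True show ?thesis
      by (simp add: shinv_def)
  next
    case False
    show ?thesis
      unfolding shinv_def wfcomp_def by (simp only: False if_False simp_thms)
  qed
qed

subsection \<open>Fixed points of the mixed composition\<close>

lemma mixcomp_cong_shorter:
  assumes "\<And>j v. length v < length w \<Longrightarrow> g j v = g' j v"
  shows "mixcomp l m c g i w = mixcomp l m c g' i w"
  unfolding mixcomp_def using phi_cong_shorter[of w g g'] assms by simp

lemma wfcomp_cong_le: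
  assumes "\<And>j v. length v \<le> length w \<Longrightarrow> e j v = e' j v"
  shows "wfcomp m q d e i w = wfcomp m q d e' i w"
proof -
  have "shmon e alpha [1..<q+1] w = shmon e' alpha [1..<q+1] w" for alpha
    by (rule shmon_cong) (use assms in \<open>auto simp: word_below_def\<close>)
  then show ?thesis
    by (simp add: wfcomp_def)
qed

lemma compinv_fixpoint: "compinv m g = mixcomp m m (shinv m g) (compinv m g)"
proof -
  have "\<exists>!h. h = mixcomp m m (shinv m g) h"
    by (rule contractive_fixpoint_unique_indexed[where sz=length]) (rule mixcomp_cong_shorter)
  then show ?thesis
    unfolding compinv_def by (rule theI')
qed

lemma mixcomp_in_proper_series:
  assumes "\<forall>j. c j [] = 0"
  shows "mixcomp l m c g \<in> proper_series l m"
proof -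
  have "{eta. set eta \<subseteq> {0..m} \<and> length eta \<le> 0} = {[]}"
    by auto
  then show ?thesis
    using assms by (simp add: proper_series_def series_def mixcomp_def)
qed

theorem theorem17:
  fixes m q :: nat and c :: vncs and d :: vcs
  assumes c_proper: "c \<in> proper_series q m"
    and d_ser: "d \<in> cseries m q"
    and d_pi: "\<forall>i\<in>{1..m}. d i (\<lambda>_. 0) \<noteq> 0"
  shows "mixcomp q m c (compinv m (wfcomp m q (cinv m q d) c)) \<in> proper_series q m
       \<and> mixcomp q m c (compinv m (wfcomp m q (cinv m q d) c))
           = mixcomp q m c (wfcomp m q d (mixcomp q m c (compinv m (wfcomp m q (cinv m q d) c))))
       \<and> (\<forall>e\<in>proper_series q m. e = mixcomp q m c (wfcomp m q d e)
             \<longrightarrow> e = mixcomp q m c (compinv m (wfcomp m q (cinv m q d) c)))"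
proof -
  define h where "h = compinv m (wfcomp m q (cinv m q d) c)"
  have c: "\<forall>j. c j [] = 0"
    using c_proper by (simp add: proper_series_def)
  have "h = mixcomp m m (shinv m (wfcomp m q (cinv m q d) c)) h"
    unfolding h_def by (rule compinv_fixpoint)
  also have "\<dots> = mixcomp m m (wfcomp m q d c) h"
    using shinv_wfcomp_cinv[of q c m d] c d_pi by simp
  also have "\<dots> = wfcomp m q d (mixcomp q m c h)"
    using wfcomp_mixcomp[of q c] c by simp
  finally have fixpoint: "mixcomp q m c h = mixcomp q m c (wfcomp m q d (mixcomp q m c h))"
    by simp
  have unique: "\<exists>!e. e = mixcomp q m c (wfcomp m q d e)"
    by (rule contractive_fixpoint_unique_indexed[where sz=length])
      (intro mixcomp_cong_shorter wfcomp_cong_le, simp)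
  show ?thesis
    using mixcomp_in_proper_series[where c=c, OF c] fixpoint unique unfolding h_def by blast
qed

end
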